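(* Let $W\in\mathbb{D}_n$ be a Dale matrix with excitatory neurons $\mathcal{E}$ and inhibitory neurons $\mathcal{I}$, satisfying the Ground Assumption, and let $W'\in\mathbb{D}_n$ (same partition) be defined by $W'_{ij}=0$ for all $i\in\mathcal{I}$, $j\in\mathcal{E}$, and $W'_{ij}=W_{ij}$ otherwise. Then $\mathcal{C}(W)=\mathcal{C}(W')$.
   Context: Threshold-linear network: for $W\in\mathbb{R}^{n\times n}$ and $b\in\mathbb{R}^n$, the dynamics are $\dot x_i=-x_i+[\sum_{j=1}^n W_{ij}x_j+b_i]_+$, where $[y]_+=\max(0,y)$. A fixed point is $x^*\in\mathbb{R}^n$ with $x^*=[Wx^*+b]_+$. A Dale matrix $W\in\mathbb{D}_n$ is an $n\times n$ real matrix with a partition $[n]=\mathcal{E}\sqcup\mathcal{I}$ (excitatory/inhibitory) such that $W_{ii}=0$, $W_{ji}\ge0$ for all $j$ when $i\in\mathcal{E}$, and $W_{ji}\le0$ for all $j$ when $i\in\mathcal{I}$. Ground Assumption: for every nonempty $\sigma\subset[n]$, the principal submatrix $(I-W)_\sigma$ is nonsingular. Excitatory support: $\mathrm{supp}_+x=\{i\in\mathcal{E}:x_i>0\}$. Combinatorial code: $\mathcal{C}(W)=\{\mathrm{supp}_+x^*: b\in\mathbb{R}^n_{\ge0},\ x^*\in\mathbb{R}^n_{\ge0}\text{ a fixed point of }(W,b)\}$. *)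

theory Defs
  imports "Jordan_Normal_Form.Determinant" "Jordan_Normal_Form.DL_Submatrix"
begin

text \<open>Neurons are indexed by 0..n-1; E is the set of excitatory neurons,
  inhibitory neurons are the complement of E in 0..n-1.\<close>

definition dale_matrix :: "nat \<Rightarrow> nat set \<Rightarrow> real mat \<Rightarrow> bool" where
  "dale_matrix n E W \<longleftrightarrow> W \<in> carrier_mat n n \<and> E \<subseteq> {..<n} \<and>
     (\<forall>i<n. W $$ (i, i) = 0) \<and>
     (\<forall>i<n. i \<in> E \<longrightarrow> (\<forall>j<n. W $$ (j, i) \<ge> 0)) \<and>
     (\<forall>i<n. i \<notin> E \<longrightarrow> (\<forall>j<n. W $$ (j, i) \<le> 0))"

definition ground_assumption :: "nat \<Rightarrow> real mat \<Rightarrow> bool" where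
  "ground_assumption n W \<longleftrightarrow>
     (\<forall>\<sigma>. \<sigma> \<noteq> {} \<and> \<sigma> \<subseteq> {..<n} \<longrightarrow> det (submatrix (1\<^sub>m n - W) \<sigma> \<sigma>) \<noteq> 0)"

definition relu_vec :: "real vec \<Rightarrow> real vec" where
  "relu_vec v = map_vec (\<lambda>y. max 0 y) v"

definition is_fixed_point :: "real mat \<Rightarrow> real vec \<Rightarrow> real vec \<Rightarrow> bool" where
  "is_fixed_point W b x \<longleftrightarrow> x = relu_vec (W *\<^sub>v x + b)"

definition supp_plus :: "nat set \<Rightarrow> real vec \<Rightarrow> nat set" where
  "supp_plus E x = {i \<in> E. i < dim_vec x \<and> x $ i > 0}"

definition comb_code :: "nat \<Rightarrow> nat set \<Rightarrow> real mat \<Rightarrow> nat set set" where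
  "comb_code n E W = {supp_plus E x | b x.
      b \<in> carrier_vec n \<and> x \<in> carrier_vec n \<and>
      (\<forall>i<n. b $ i \<ge> 0) \<and> (\<forall>i<n. x $ i \<ge> 0) \<and> is_fixed_point W b x}"

text \<open>W' : delete all excitatory-to-inhibitory connections (rows in I, columns in E).\<close>
definition drop_EI :: "nat \<Rightarrow> nat set \<Rightarrow> real mat \<Rightarrow> real mat" where
  "drop_EI n E W = mat n n (\<lambda>(i, j). if i \<notin> E \<and> j \<in> E then 0 else W $$ (i, j))"

end

theory Submission
  imports Defs
begin

text \<open>A nonnegative vector y with W y \<le> y is a fixed point for the nonnegative input b = y - W y,
  and conversely every fixed point x with b \<ge> 0 satisfies x \<ge> W x + b \<ge> W x. Hence the code
  consists exactly of the excitatory supports of such subinvariant vectors. Deleting the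
  nonnegative excitatory-to-inhibitory weights can only enlarge this set. Conversely, if y is
  subinvariant for the reduced matrix, raising every inhibitory neuron by the excitatory input
  it lost gives a vector z with the same excitatory support that is subinvariant for W: the raised
  inhibitory activity only lowers the inputs of the other neurons.\<close>

definition subinvariant_vecs :: "nat \<Rightarrow> real mat \<Rightarrow> real vec set" where
  "subinvariant_vecs n W = {y \<in> carrier_vec n. \<forall>i<n. 0 \<le> y $ i \<and> (W *\<^sub>v y) $ i \<le> y $ i}"

lemma mult_mat_vec_index_sum:
  assumes "A \<in> carrier_mat n n" "v \<in> carrier_vec n" "i < n"
  shows "(A *\<^sub>v v) $ i = (\<Sum>j<n. A $$ (i, j) * v $ j)"
  using assms by (simp add: scalar_prod_def atLeast0LessThan mult.commute)

lemma is_fixed_point_iff: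
  assumes "W \<in> carrier_mat n n" "x \<in> carrier_vec n" "b \<in> carrier_vec n"
  shows "is_fixed_point W b x \<longleftrightarrow> (\<forall>i<n. x $ i = max 0 ((W *\<^sub>v x) $ i + b $ i))"
  using assms unfolding is_fixed_point_def relu_vec_def by (auto simp: vec_eq_iff)

lemma comb_code_eq_supp_subinvariant:
  assumes W: "W \<in> carrier_mat n n"
  shows "comb_code n E W = supp_plus E ` subinvariant_vecs n W"
proof
  show "comb_code n E W \<subseteq> supp_plus E ` subinvariant_vecs n W"
  proof
    fix S assume "S \<in> comb_code n E W"
    then obtain b x where S: "S = supp_plus E x" and b: "b \<in> carrier_vec n" "\<forall>i<n. 0 \<le> b $ i"
      and x: "x \<in> carrier_vec n" "\<forall>i<n. 0 \<le> x $ i" and fp: "is_fixed_point W b x"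
      unfolding comb_code_def by blast
    have "(W *\<^sub>v x) $ i \<le> x $ i" if i: "i < n" for i
    proof -
      have "x $ i = max 0 ((W *\<^sub>v x) $ i + b $ i)"
        using fp i by (simp add: is_fixed_point_iff[OF W x(1) b(1)])
      moreover have "0 \<le> b $ i" using b(2) i by blast
      ultimately show ?thesis by linarith
    qed
    then have "x \<in> subinvariant_vecs n W" using x unfolding subinvariant_vecs_def by blast
    then show "S \<in> supp_plus E ` subinvariant_vecs n W" using S by blast
  qed
next
  show "supp_plus E ` subinvariant_vecs n W \<subseteq> comb_code n E W"
  proof
    fix S assume "S \<in> supp_plus E ` subinvariant_vecs n W"
    then obtain y where S: "S = supp_plus E y" and yC: "y \<in> carrier_vec n"
      and y_nonneg: "\<forall>i<n. 0 \<le> y $ i" and y_sub: "\<forall>i<n. (W *\<^sub>v y) $ i \<le> y $ i"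
      unfolding subinvariant_vecs_def by blast
    define b where "b = y - W *\<^sub>v y"
    have bC: "b \<in> carrier_vec n" using yC W by (simp add: b_def)
    have b_index: "b $ i = y $ i - (W *\<^sub>v y) $ i" if "i < n" for i
      using that yC W by (simp add: b_def)
    have "is_fixed_point W b y"
      unfolding is_fixed_point_iff[OF W yC bC] using y_nonneg by (simp add: b_index)
    moreover have "\<forall>i<n. 0 \<le> b $ i" using y_sub by (simp add: b_index)
    ultimately show "S \<in> comb_code n E W"
      unfolding comb_code_def using S yC bC y_nonneg by blast
  qed
qed

lemma subinvariant_vecs_antimono:
  assumes A: "A \<in> carrier_mat n n" and B: "B \<in> carrier_mat n n"
    and le: "\<And>i j. i < n \<Longrightarrow> j < n \<Longrightarrow> A $$ (i, j) \<le> B $$ (i, j)"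
  shows "subinvariant_vecs n B \<subseteq> subinvariant_vecs n A"
proof
  fix y assume y: "y \<in> subinvariant_vecs n B"
  then have yC: "y \<in> carrier_vec n" and y_nonneg: "\<And>j. j < n \<Longrightarrow> 0 \<le> y $ j"
    unfolding subinvariant_vecs_def by auto
  have "(A *\<^sub>v y) $ i \<le> (B *\<^sub>v y) $ i" if "i < n" for i
    unfolding mult_mat_vec_index_sum[OF A yC that] mult_mat_vec_index_sum[OF B yC that]
    using that le y_nonneg by (intro sum_mono mult_right_mono) auto
  with y show "y \<in> subinvariant_vecs n A"
    unfolding subinvariant_vecs_def by (auto intro: order_trans)
qed

lemma drop_EI_carrier: "drop_EI n E W \<in> carrier_mat n n"
  by (simp add: drop_EI_def)

lemma drop_EI_index:
  "i < n \<Longrightarrow> j < n \<Longrightarrow> drop_EI n E W $$ (i, j) = (if i \<notin> E \<and> j \<in> E then 0 else W $$ (i, j))"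
  by (simp add: drop_EI_def)

lemma drop_EI_le:
  assumes "dale_matrix n E W" "i < n" "j < n"
  shows "drop_EI n E W $$ (i, j) \<le> W $$ (i, j)"
  using assms unfolding dale_matrix_def by (simp add: drop_EI_index)

lemma subinvariant_vec_of_drop_EI:
  assumes D: "dale_matrix n E W" and y: "y \<in> subinvariant_vecs n (drop_EI n E W)"
  obtains z where "z \<in> subinvariant_vecs n W" "supp_plus E z = supp_plus E y"
proof -
  let ?W' = "drop_EI n E W"
  have W: "W \<in> carrier_mat n n" and E: "E \<subseteq> {..<n}"
    and inh: "\<And>i j. i < n \<Longrightarrow> j < n \<Longrightarrow> j \<notin> E \<Longrightarrow> W $$ (i, j) \<le> 0"
    using D unfolding dale_matrix_def by auto
  have yC: "y \<in> carrier_vec n" and y_nonneg: "\<And>j. j < n \<Longrightarrow> 0 \<le> y $ j"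
    and y_sub: "\<And>i. i < n \<Longrightarrow> (?W' *\<^sub>v y) $ i \<le> y $ i"
    using y unfolding subinvariant_vecs_def by auto
  define d where "d = W *\<^sub>v y - ?W' *\<^sub>v y"
  have dC: "d \<in> carrier_vec n"
    unfolding d_def using W yC drop_EI_carrier
    by (metis minus_carrier_vec mult_mat_vec_carrier)
  have d_diff: "d $ i = (W *\<^sub>v y) $ i - (?W' *\<^sub>v y) $ i" if "i < n" for i
    using that W yC drop_EI_carrier[of n E W] by (simp add: d_def)
  have d_index: "d $ i = (\<Sum>j<n. (W $$ (i, j) - ?W' $$ (i, j)) * y $ j)" if i: "i < n" for i
    unfolding d_diff[OF i] mult_mat_vec_index_sum[OF W yC i]
      mult_mat_vec_index_sum[OF drop_EI_carrier yC i]
    by (simp add: sum_subtractf left_diff_distrib)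
  have d_nonneg: "0 \<le> d $ i" if i: "i < n" for i
    unfolding d_index[OF i] using i drop_EI_le[OF D] y_nonneg
    by (intro sum_nonneg mult_nonneg_nonneg) auto
  have d_exc: "d $ i = 0" if "i < n" "i \<in> E" for i
    unfolding d_index[OF that(1)] using that by (simp add: drop_EI_index)
  \<comment> \<open>d lives on inhibitory neurons, whose outgoing weights are nonpositive\<close>
  have Wd_nonpos: "(W *\<^sub>v d) $ i \<le> 0" if i: "i < n" for i
    unfolding mult_mat_vec_index_sum[OF W dC i]
  proof (intro sum_nonpos)
    fix j assume "j \<in> {..<n}"
    then show "W $$ (i, j) * d $ j \<le> 0"
      using i inh d_nonneg d_exc by (cases "j \<in> E") (auto intro: mult_nonpos_nonneg)
  qed
  define z where "z = y + d"
  have zC: "z \<in> carrier_vec n" using yC dC by (simp add: z_def)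
  have z_index: "z $ i = y $ i + d $ i" if "i < n" for i
    using that dC by (simp add: z_def)
  have "(W *\<^sub>v z) $ i \<le> z $ i" if i: "i < n" for i
  proof -
    have "(W *\<^sub>v z) $ i = (W *\<^sub>v y) $ i + (W *\<^sub>v d) $ i"
      using i W by (simp add: z_def mult_add_distrib_mat_vec[OF W yC dC])
    also have "\<dots> = (?W' *\<^sub>v y) $ i + d $ i + (W *\<^sub>v d) $ i"
      using d_diff[OF i] by simp
    also have "\<dots> \<le> y $ i + d $ i" using y_sub[OF i] Wd_nonpos[OF i] by simp
    finally show ?thesis using z_index[OF i] by simp
  qed
  then have "z \<in> subinvariant_vecs n W"
    using zC y_nonneg d_nonneg z_index unfolding subinvariant_vecs_def by auto
  moreover have "supp_plus E z = supp_plus E y"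
    using E yC zC z_index d_exc unfolding supp_plus_def by auto
  ultimately show ?thesis by (rule that)
qed

theorem mainTheorem2:
  fixes n :: nat and E :: "nat set" and W :: "real mat"
  assumes "dale_matrix n E W"
    and "ground_assumption n W"
  shows "comb_code n E W = comb_code n E (drop_EI n E W)"
proof -
  have W: "W \<in> carrier_mat n n" using assms(1) unfolding dale_matrix_def by blast
  have "subinvariant_vecs n W \<subseteq> subinvariant_vecs n (drop_EI n E W)"
    using subinvariant_vecs_antimono[OF drop_EI_carrier W] drop_EI_le[OF assms(1)] by blast
  moreover have "supp_plus E ` subinvariant_vecs n (drop_EI n E W) \<subseteq> supp_plus E ` subinvariant_vecs n W"
    using subinvariant_vec_of_drop_EI[OF assms(1)] by (metis image_eqI image_subsetI)
  ultimately show ?thesis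
    unfolding comb_code_eq_supp_subinvariant[OF W] comb_code_eq_supp_subinvariant[OF drop_EI_carrier]
    by blast
qed

end
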